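(* If $d$ and $e$ are degree sequences with the same sum and $d\succeq e$, then $\Delta^*(d)\le\Delta^*(e)$.
   Context: Degree sequences (of finite simple graphs, terms may be $0$) are listed in nonincreasing order; sequences of different lengths are compared after padding with zeros. $m(d)=\max\{i : d_i\ge i-1\}$. For integers $k\ge 0$, $\Delta_k(d)=k(k-1)+\sum_{i>k}\min\{k,d_i\}-\sum_{i\le k}d_i$, and $\Delta^*(d)=\max\{\Delta_k(d):1\le k\le m(d)\}$. Majorization (dominance order): for degree sequences $d,e$ with the same sum, $d\succeq e$ means $\sum_{i\le k}d_i\ge\sum_{i\le k}e_i$ for all $k$. *)

theory Defs
  imports Main
begin

definition simple_graph_on :: "nat \<Rightarrow> (nat \<Rightarrow> nat \<Rightarrow> bool) \<Rightarrow> bool" where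
  "simple_graph_on n E \<longleftrightarrow>
     (\<forall>u v. E u v \<longrightarrow> E v u) \<and> (\<forall>u. \<not> E u u) \<and> (\<forall>u v. E u v \<longrightarrow> u < n \<and> v < n)"

definition degree_sequence :: "nat list \<Rightarrow> bool" where
  "degree_sequence d \<longleftrightarrow>
     sorted_wrt (\<ge>) d \<and>
     (\<exists>E. simple_graph_on (length d) E \<and>
          (\<forall>i < length d. card {j. j < length d \<and> E i j} = d ! i))"

text \<open>1-indexed entry, padded with zeros.\<close>
definition dseq :: "nat list \<Rightarrow> nat \<Rightarrow> nat" where
  "dseq d i = (if 1 \<le> i \<and> i \<le> length d then d ! (i - 1) else 0)"

text \<open>m(d) = max{i : d_i >= i - 1} (indices i >= 1, zero padding; beyond length d + 1 the
  condition fails, except that i = 1 always qualifies).\<close>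
definition mval :: "nat list \<Rightarrow> nat" where
  "mval d = Max {i. 1 \<le> i \<and> i \<le> length d + 1 \<and> i - 1 \<le> dseq d i}"

definition Delta :: "nat \<Rightarrow> nat list \<Rightarrow> int" where
  "Delta k d = int (k * (k - 1)) + (\<Sum>i = k + 1..length d. int (min k (dseq d i)))
               - (\<Sum>i = 1..k. int (dseq d i))"

definition Delta_star :: "nat list \<Rightarrow> int" where
  "Delta_star d = Max ((\<lambda>k. Delta k d) ` {1..mval d})"

definition majorizes :: "nat list \<Rightarrow> nat list \<Rightarrow> bool" where
  "majorizes d e \<longleftrightarrow> sum_list d = sum_list e \<and>
     (\<forall>k. (\<Sum>i = 1..k. dseq e i) \<le> (\<Sum>i = 1..k. dseq d i))"

end

theory Submission
  imports Defs
begin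

text \<open>Let \<open>k \<in> [1, m(d)]\<close> maximise \<open>\<Delta>\<^sub>k(d)\<close>. Writing \<open>S\<^sub>j\<close> for prefix sums, for every \<open>j \<ge> k\<close>
  one has \<open>\<Delta>\<^sub>k \<le> k(k-1) + (j-k)k + S\<^sub>n - S\<^sub>j - S\<^sub>k\<close>, with equality for the nonincreasing
  sequence \<open>e\<close> when \<open>j\<close> is the last index with \<open>e\<^sub>j \<ge> k\<close>. Since \<open>d\<close> has the larger prefix
  sums and the same total, \<open>\<Delta>\<^sub>k(d) \<le> \<Delta>\<^sub>k(e)\<close>, which settles the case \<open>k \<le> m(e)\<close>.
  Otherwise \<open>p = m(e) < k\<close>; all of \<open>e\<^sub>i\<close> with \<open>i > p\<close> are below \<open>p\<close>, so
  \<open>\<Delta>\<^sub>p(e) = p(p-1) + S\<^sub>n(e) - 2S\<^sub>p(e)\<close>, while \<open>d\<^sub>i \<ge> k - 1\<close> for \<open>i \<le> k \<le> m(d)\<close> gives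
  \<open>\<Delta>\<^sub>k(d) \<le> \<Delta>\<^sub>p(e) - (k-p)(k-p-1)\<close>.\<close>

definition psum :: "(nat \<Rightarrow> nat) \<Rightarrow> nat \<Rightarrow> int" where
  "psum f k = (\<Sum>i = 1..k. int (f i))"

definition Delta_seq :: "nat \<Rightarrow> nat \<Rightarrow> (nat \<Rightarrow> nat) \<Rightarrow> int" where
  "Delta_seq N k f = int (k * (k - 1)) + (\<Sum>i = k + 1..N. int (min k (f i))) - psum f k"

lemma sum_atLeastAtMost_Suc_split:
  fixes h :: "nat \<Rightarrow> int"
  assumes "a \<le> b" "b \<le> c"
  shows "(\<Sum>i = a + 1..c. h i) = (\<Sum>i = a + 1..b. h i) + (\<Sum>i = b + 1..c. h i)"
proof -
  have "{a + 1..c} = {a + 1..b} \<union> {b + 1..c}" using assms by auto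
  then show ?thesis by (simp add: sum.union_disjoint)
qed

lemma psum_diff:
  assumes "a \<le> b"
  shows "(\<Sum>i = a + 1..b. int (f i)) = psum f b - psum f a"
  unfolding psum_def using sum_atLeastAtMost_Suc_split[of 0 a b "\<lambda>i. int (f i)"] assms by simp

lemma sum_min_le_psum:
  assumes "k \<le> j" "j \<le> N"
  shows "(\<Sum>i = k + 1..N. int (min k (f i))) \<le> int ((j - k) * k) + psum f N - psum f j"
proof -
  have "(\<Sum>i = k + 1..j. int (min k (f i))) \<le> (\<Sum>i = k + 1..j. int k)"
    by (rule sum_mono) simp
  moreover have "(\<Sum>i = j + 1..N. int (min k (f i))) \<le> (\<Sum>i = j + 1..N. int (f i))"
    by (rule sum_mono) simp
  ultimately show ?thesis
    using sum_atLeastAtMost_Suc_split[OF assms] psum_diff[OF assms(2)] assms(1)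
    by (simp add: of_nat_diff)
qed

lemma sum_min_eq_psum:
  assumes "k \<le> j" "j \<le> N"
    and "\<And>i. k < i \<Longrightarrow> i \<le> j \<Longrightarrow> k \<le> f i"
    and "\<And>i. j < i \<Longrightarrow> i \<le> N \<Longrightarrow> f i \<le> k"
  shows "(\<Sum>i = k + 1..N. int (min k (f i))) = int ((j - k) * k) + psum f N - psum f j"
proof -
  have "(\<Sum>i = k + 1..j. int (min k (f i))) = (\<Sum>i = k + 1..j. int k)"
    by (rule sum.cong) (use assms(3) in \<open>auto simp: min_def\<close>)
  moreover have "(\<Sum>i = j + 1..N. int (min k (f i))) = (\<Sum>i = j + 1..N. int (f i))"
    by (rule sum.cong) (use assms(4) in \<open>auto simp: min_absorb2\<close>)
  ultimately show ?thesis
    using sum_atLeastAtMost_Suc_split[OF assms(1,2)] psum_diff[OF assms(2)] assms(1)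
    by (simp add: of_nat_diff)
qed

lemma antitone_threshold:
  fixes g :: "nat \<Rightarrow> nat" and k N :: nat
  assumes anti: "\<And>i j. 1 \<le> i \<Longrightarrow> i \<le> j \<Longrightarrow> g j \<le> g i" and "k \<le> N"
  obtains j where "k \<le> j" "j \<le> N"
    "\<And>i. k < i \<Longrightarrow> i \<le> j \<Longrightarrow> k \<le> g i"
    "\<And>i. j < i \<Longrightarrow> i \<le> N \<Longrightarrow> g i \<le> k"
proof -
  define A where "A = {j. k \<le> j \<and> j \<le> N \<and> (j = k \<or> k \<le> g j)}"
  define j where "j = Max A"
  have "finite A" "k \<in> A" unfolding A_def using \<open>k \<le> N\<close> by auto
  then have "j \<in> A" and j_max: "\<And>i. i \<in> A \<Longrightarrow> i \<le> j"
    unfolding j_def using Max_in Max_ge by blast+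
  then have "k \<le> j" "j \<le> N" unfolding A_def by auto
  show ?thesis
  proof
    show "k \<le> g i" if "k < i" "i \<le> j" for i
      using \<open>j \<in> A\<close> anti[of i j] that unfolding A_def by auto
    show "g i \<le> k" if "j < i" "i \<le> N" for i
      using j_max[of i] that \<open>k \<le> j\<close> unfolding A_def by fastforce
  qed fact+
qed

lemma Delta_seq_le_if_majorized:
  assumes anti: "\<And>i j. 1 \<le> i \<Longrightarrow> i \<le> j \<Longrightarrow> g j \<le> g i"
    and total: "psum f N = psum g N"
    and maj: "\<And>k. psum g k \<le> psum f k"
  shows "Delta_seq N k f \<le> Delta_seq N k g"
proof (cases "k \<le> N")
  case True
  obtain j where j: "k \<le> j" "j \<le> N"
    "\<And>i. k < i \<Longrightarrow> i \<le> j \<Longrightarrow> k \<le> g i" "\<And>i. j < i \<Longrightarrow> i \<le> N \<Longrightarrow> g i \<le> k"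
    using antitone_threshold[of g k N] anti True by blast
  show ?thesis
    using sum_min_le_psum[OF j(1,2), of f] sum_min_eq_psum[of k j N g, OF j] total maj[of j] maj[of k]
    unfolding Delta_seq_def by linarith
next
  case False
  then show ?thesis unfolding Delta_seq_def using maj[of k] by simp
qed

lemma Delta_seq_le_smaller_index:
  assumes large: "\<And>i. 1 \<le> i \<Longrightarrow> i \<le> k \<Longrightarrow> k - 1 \<le> f i"
    and small: "\<And>i. p < i \<Longrightarrow> g i \<le> p"
    and total: "psum f N = psum g N"
    and maj: "psum g p \<le> psum f p"
    and "1 \<le> p" "p < k" "k \<le> N"
  shows "Delta_seq N k f \<le> Delta_seq N p g"
proof -
  have g_eq: "Delta_seq N p g = int (p * (p - 1)) + psum g N - 2 * psum g p"
    using sum_min_eq_psum[of p p N g] small assms(6,7) unfolding Delta_seq_def by simp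
  have f_le: "Delta_seq N k f \<le> int (k * (k - 1)) + psum f N - 2 * psum f k"
    using sum_min_le_psum[of k k N f] assms(7) unfolding Delta_seq_def by simp
  have "(\<Sum>i = p + 1..k. int (k - 1)) \<le> (\<Sum>i = p + 1..k. int (f i))"
  proof (rule sum_mono)
    fix i assume "i \<in> {p + 1..k}"
    then have "k - 1 \<le> f i" using large assms(5) by simp
    then show "int (k - 1) \<le> int (f i)" by (simp only: of_nat_le_iff)
  qed
  then have f_psum: "psum f p + int (k - p) * int (k - 1) \<le> psum f k"
    using psum_diff[of p k f] assms(6) by simp
  define K P where "K = int k" and "P = int p"
  have "int (k * (k - 1)) = K * (K - 1)" "int (p * (p - 1)) = P * (P - 1)"
    "int (k - p) * int (k - 1) = (K - P) * (K - 1)"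
    unfolding K_def P_def using assms(5,6) by (simp_all add: of_nat_diff)
  moreover have "P * (P - 1) - K * (K - 1) + 2 * ((K - P) * (K - 1)) = (K - P) * (K - P - 1)"
    by (simp add: algebra_simps)
  moreover have "0 \<le> (K - P) * (K - P - 1)"
    using assms(6) unfolding K_def P_def by simp
  ultimately show ?thesis using g_eq f_le f_psum total maj by linarith
qed

lemma Delta_eq_Delta_seq:
  assumes "length d \<le> N"
  shows "Delta k d = Delta_seq N k (dseq d)"
proof -
  have "(\<Sum>i = k + 1..N. int (min k (dseq d i))) = (\<Sum>i = k + 1..length d. int (min k (dseq d i)))"
    by (rule sum.mono_neutral_right) (use assms in \<open>auto simp: dseq_def\<close>)
  then show ?thesis unfolding Delta_def Delta_seq_def psum_def by simp
qed

lemma psum_dseq_eq_sum_list: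
  assumes "length d \<le> N"
  shows "psum (dseq d) N = int (sum_list d)"
proof -
  have "psum (dseq d) N = (\<Sum>i<N. int (dseq d (Suc i)))"
    unfolding psum_def by (induction N) (auto simp: sum.cl_ivl_Suc)
  also have "\<dots> = (\<Sum>i<length d. int (d ! i))"
    by (rule sum.mono_neutral_cong_right) (use assms in \<open>auto simp: dseq_def\<close>)
  also have "\<dots> = int (sum_list d)"
    by (simp add: sum_list_sum_nth atLeast0LessThan)
  finally show ?thesis .
qed

lemma majorizes_psum_le:
  assumes "majorizes d e"
  shows "psum (dseq e) k \<le> psum (dseq d) k"
proof -
  have "(\<Sum>i = 1..k. dseq e i) \<le> (\<Sum>i = 1..k. dseq d i)"
    using assms unfolding majorizes_def by blast
  then show ?thesis unfolding psum_def of_nat_sum[symmetric] by (simp only: of_nat_le_iff)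
qed

lemma dseq_antimono:
  assumes "sorted_wrt (\<ge>) d" "1 \<le> i" "i \<le> j"
  shows "dseq d j \<le> dseq d i"
proof (cases "i < j \<and> j \<le> length d")
  case True
  then have "i - 1 < j - 1" "j - 1 < length d" using assms(2) by auto
  then have "d ! (j - 1) \<le> d ! (i - 1)" using sorted_wrt_nth_less[OF assms(1)] by blast
  then show ?thesis using True assms(2) unfolding dseq_def by simp
qed (use assms in \<open>auto simp: dseq_def\<close>)

lemma mval_mem:
  "1 \<le> mval d" "mval d \<le> length d + 1" "mval d - 1 \<le> dseq d (mval d)"
proof -
  let ?M = "{i. 1 \<le> i \<and> i \<le> length d + 1 \<and> i - 1 \<le> dseq d i}"
  have "finite ?M" by (rule finite_subset[of _ "{..length d + 1}"]) auto
  moreover have "1 \<in> ?M" by simp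
  ultimately have "mval d \<in> ?M" unfolding mval_def using Max_in by blast
  then show "1 \<le> mval d" "mval d \<le> length d + 1" "mval d - 1 \<le> dseq d (mval d)" by auto
qed

lemma le_mval:
  assumes "1 \<le> i" "i \<le> length d + 1" "i - 1 \<le> dseq d i"
  shows "i \<le> mval d"
proof -
  have "finite {i. 1 \<le> i \<and> i \<le> length d + 1 \<and> i - 1 \<le> dseq d i}"
    by (rule finite_subset[of _ "{..length d + 1}"]) auto
  then show ?thesis unfolding mval_def using assms by (simp add: Max_ge)
qed

lemma dseq_ge_below_mval:
  assumes "sorted_wrt (\<ge>) d" "1 \<le> i" "i \<le> k" "k \<le> mval d"
  shows "k - 1 \<le> dseq d i"
  using mval_mem(3)[of d] dseq_antimono[OF assms(1,2), of "mval d"] assms(3,4) by linarith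

lemma dseq_lt_beyond_mval:
  assumes "sorted_wrt (\<ge>) d" "mval d < i"
  shows "dseq d i < mval d"
proof -
  have "dseq d (mval d + 1) < mval d"
  proof (cases "mval d + 1 \<le> length d + 1")
    case True
    then show ?thesis using le_mval[of "mval d + 1" d] by fastforce
  next
    case False
    then show ?thesis using mval_mem(1)[of d] by (simp add: dseq_def)
  qed
  then show ?thesis using dseq_antimono[OF assms(1), of "mval d + 1" i] assms(2) by simp
qed

lemma Delta_le_Delta_star:
  assumes "k \<in> {1..mval d}"
  shows "Delta k d \<le> Delta_star d"
  unfolding Delta_star_def using assms by (simp add: Max_ge)

lemma Delta_star_attained:
  obtains k where "k \<in> {1..mval d}" "Delta_star d = Delta k d"
proof -
  have "(\<lambda>k. Delta k d) ` {1..mval d} \<noteq> {}" using mval_mem(1)[of d] by auto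
  then have "Delta_star d \<in> (\<lambda>k. Delta k d) ` {1..mval d}"
    unfolding Delta_star_def by (simp add: Max_in)
  then show ?thesis using that by blast
qed

theorem theorem17:
  fixes d e :: "nat list"
  assumes "degree_sequence d" and "degree_sequence e"
    and "sum_list d = sum_list e"
    and "majorizes d e"
  shows "Delta_star d \<le> Delta_star e"
proof -
  have sorted: "sorted_wrt (\<ge>) d" "sorted_wrt (\<ge>) e"
    using assms(1,2) unfolding degree_sequence_def by simp_all
  define N where "N = length d + length e + 2"
  have Delta_d: "Delta k d = Delta_seq N k (dseq d)" and Delta_e: "Delta k e = Delta_seq N k (dseq e)" for k
    by (simp_all add: Delta_eq_Delta_seq N_def)
  have total: "psum (dseq d) N = psum (dseq e) N"
    using psum_dseq_eq_sum_list[of d N] psum_dseq_eq_sum_list[of e N] assms(3) by (simp add: N_def)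
  note maj = majorizes_psum_le[OF assms(4)]
  obtain k where k: "k \<in> {1..mval d}" and max_d: "Delta_star d = Delta k d"
    using Delta_star_attained by blast
  show ?thesis
  proof (cases "k \<le> mval e")
    case True
    have "Delta k d \<le> Delta k e" unfolding Delta_d Delta_e
      by (rule Delta_seq_le_if_majorized[OF dseq_antimono[OF sorted(2)] total maj])
    then show ?thesis using Delta_le_Delta_star[of k e] k True max_d by simp
  next
    case False
    have "k \<le> N" using k mval_mem(2)[of d] by (simp add: N_def)
    have "k - 1 \<le> dseq d i" if "1 \<le> i" "i \<le> k" for i
      using dseq_ge_below_mval[OF sorted(1) that] k by simp
    moreover have "dseq e i \<le> mval e" if "mval e < i" for i
      using dseq_lt_beyond_mval[OF sorted(2) that] by simp
    ultimately have "Delta k d \<le> Delta (mval e) e" unfolding Delta_d Delta_e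
      using False \<open>k \<le> N\<close> mval_mem(1)[of e]
      by (intro Delta_seq_le_smaller_index[OF _ _ total maj]) simp_all
    then show ?thesis using Delta_le_Delta_star[of "mval e" e] mval_mem(1)[of e] max_d by simp
  qed
qed

end
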